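(* Let $\Gamma$ act by automorphisms on a finite dimensional CAT(0) cube complex $X$. If the action is Roller elementary (some $\Gamma$-orbit in $\overline X$ is finite), then there are $v,w\in\overline X$ with $\Gamma\cdot\mathcal I(v,w)=\mathcal I(v,w)$. If moreover some $\Gamma$-orbit in $\overline X$ has odd cardinality, then $\Gamma$ has a fixed point in $\overline X$.
   Context: $X$ is a finite-dimensional, second countable CAT(0) cube complex identified with its vertex set; $\mathfrak H$ its half-spaces; $U_v=\{h:v\in h\}$; the Roller compactification $\overline X$ is the closure of $\{U_v\}$ in $2^{\mathfrak H}$, each $\xi\in\overline X$ being a subset $U_\xi\subset\mathfrak H$. For $v,w\in\overline X$, $\mathcal I(v,w)=\{m\in\overline X:U_v\cap U_w\subset U_m\}$. *)

theory Defs
  imports "HOL-Algebra.Group_Action" "HOL-Library.Countable_Set"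
begin

text \<open>A CAT(0) cube complex is identified with its vertex set, i.e. with its
1-skeleton, which is a median graph (Chepoi, Roller).\<close>

definition gpath :: "'a set \<Rightarrow> ('a \<Rightarrow> 'a \<Rightarrow> bool) \<Rightarrow> 'a \<Rightarrow> 'a \<Rightarrow> nat \<Rightarrow> bool" where
  "gpath V E x y n \<longleftrightarrow> (\<exists>xs. length xs = Suc n \<and> hd xs = x \<and> last xs = y \<and> set xs \<subseteq> V
      \<and> (\<forall>i<n. E (xs ! i) (xs ! Suc i)))"

definition gdist :: "'a set \<Rightarrow> ('a \<Rightarrow> 'a \<Rightarrow> bool) \<Rightarrow> 'a \<Rightarrow> 'a \<Rightarrow> nat" where
  "gdist V E x y = (LEAST n. gpath V E x y n)"

definition ginterval :: "'a set \<Rightarrow> ('a \<Rightarrow> 'a \<Rightarrow> bool) \<Rightarrow> 'a \<Rightarrow> 'a \<Rightarrow> 'a set" where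
  "ginterval V E x y = {z \<in> V. gdist V E x z + gdist V E z y = gdist V E x y}"

definition median_graph :: "'a set \<Rightarrow> ('a \<Rightarrow> 'a \<Rightarrow> bool) \<Rightarrow> bool" where
  "median_graph V E \<longleftrightarrow>
     (\<forall>x y. E x y \<longrightarrow> x \<in> V \<and> y \<in> V \<and> E y x \<and> x \<noteq> y) \<and>
     (\<forall>x\<in>V. \<forall>y\<in>V. \<exists>n. gpath V E x y n) \<and>
     (\<forall>x\<in>V. \<forall>y\<in>V. \<forall>z\<in>V. \<exists>!m. m \<in> ginterval V E x y \<inter> ginterval V E y z \<inter> ginterval V E x z)"

definition gconvex :: "'a set \<Rightarrow> ('a \<Rightarrow> 'a \<Rightarrow> bool) \<Rightarrow> 'a set \<Rightarrow> bool" where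
  "gconvex V E C \<longleftrightarrow> C \<subseteq> V \<and> (\<forall>x\<in>C. \<forall>y\<in>C. ginterval V E x y \<subseteq> C)"

definition halfspaces :: "'a set \<Rightarrow> ('a \<Rightarrow> 'a \<Rightarrow> bool) \<Rightarrow> 'a set set" where
  "halfspaces V E = {h. h \<noteq> {} \<and> h \<subseteq> V \<and> h \<noteq> V \<and> gconvex V E h \<and> gconvex V E (V - h)}"

definition transverse :: "'a set \<Rightarrow> 'a set \<Rightarrow> 'a set \<Rightarrow> bool" where
  "transverse V h k \<longleftrightarrow> h \<inter> k \<noteq> {} \<and> h - k \<noteq> {} \<and> k - h \<noteq> {} \<and> V - (h \<union> k) \<noteq> {}"

text \<open>Finite dimensional: uniform bound on families of pairwise transverse half-spaces
(equivalently, on the dimension of cubes).\<close>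
definition finite_dim :: "'a set \<Rightarrow> ('a \<Rightarrow> 'a \<Rightarrow> bool) \<Rightarrow> bool" where
  "finite_dim V E \<longleftrightarrow> (\<exists>N::nat. \<forall>S \<subseteq> halfspaces V E.
      (\<forall>h\<in>S. \<forall>k\<in>S. h \<noteq> k \<longrightarrow> transverse V h k) \<longrightarrow> finite S \<and> card S \<le> N)"

definition U_vert :: "'a set \<Rightarrow> ('a \<Rightarrow> 'a \<Rightarrow> bool) \<Rightarrow> 'a \<Rightarrow> 'a set set" where
  "U_vert V E v = {h \<in> halfspaces V E. v \<in> h}"

text \<open>Roller compactification: closure of {U_v} in 2^H (product topology), i.e.
subsets of H which agree with some U_v on every finite set of half-spaces.\<close>
definition roller :: "'a set \<Rightarrow> ('a \<Rightarrow> 'a \<Rightarrow> bool) \<Rightarrow> 'a set set set" where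
  "roller V E = {U. U \<subseteq> halfspaces V E \<and>
      (\<forall>F. finite F \<and> F \<subseteq> halfspaces V E \<longrightarrow> (\<exists>v\<in>V. U \<inter> F = U_vert V E v \<inter> F))}"

definition roller_interval :: "'a set \<Rightarrow> ('a \<Rightarrow> 'a \<Rightarrow> bool) \<Rightarrow> 'a set set \<Rightarrow> 'a set set \<Rightarrow> 'a set set set" where
  "roller_interval V E v w = {m \<in> roller V E. v \<inter> w \<subseteq> m}"

definition cube_action :: "('g, 'b) monoid_scheme \<Rightarrow> 'a set \<Rightarrow> ('a \<Rightarrow> 'a \<Rightarrow> bool) \<Rightarrow> ('g \<Rightarrow> 'a \<Rightarrow> 'a) \<Rightarrow> bool" where
  "cube_action G V E \<phi> \<longleftrightarrow> group_action G V \<phi> \<and>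
     (\<forall>g\<in>carrier G. \<forall>x\<in>V. \<forall>y\<in>V. E (\<phi> g x) (\<phi> g y) \<longleftrightarrow> E x y)"

definition roller_act :: "('g \<Rightarrow> 'a \<Rightarrow> 'a) \<Rightarrow> 'g \<Rightarrow> 'a set set \<Rightarrow> 'a set set" where
  "roller_act \<phi> g U = (\<lambda>h. \<phi> g ` h) ` U"

definition roller_orbit :: "('g, 'b) monoid_scheme \<Rightarrow> ('g \<Rightarrow> 'a \<Rightarrow> 'a) \<Rightarrow> 'a set set \<Rightarrow> 'a set set set" where
  "roller_orbit G \<phi> \<xi> = {roller_act \<phi> g \<xi> | g. g \<in> carrier G}"

end

theory Submission
  imports Defs
begin

text \<open>
  Let \<O> be a finite orbit in the Roller compactification and let every half-space h receive
  one vote from each point of \<O> containing it. The half-spaces with a strict majority form a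
  \<Gamma>-invariant set M. Completing M by one half-space out of each tied pair, chosen once in
  agreement with and once against a fixed point \<xi> of \<O>, gives two consistent orientations of
  all half-spaces: any two chosen half-spaces share a voter by pigeonhole, and consistent
  orientations are points of the Roller compactification by the Helly property of convex sets
  in a median graph. Their intersection is M, so the interval they span, {m. M \<subseteq> m}, is
  \<Gamma>-invariant. If |\<O>| is odd there are no ties and M itself is a fixed point.
\<close>

section \<open>Graph automorphisms\<close>

definition graph_automorphism :: "'a set \<Rightarrow> ('a \<Rightarrow> 'a \<Rightarrow> bool) \<Rightarrow> ('a \<Rightarrow> 'a) \<Rightarrow> bool" where
  "graph_automorphism V E f \<longleftrightarrow> bij_betw f V V \<and> (\<forall>x\<in>V. \<forall>y\<in>V. E (f x) (f y) \<longleftrightarrow> E x y)"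

lemma cube_action_graph_automorphism:
  assumes "cube_action G V E \<phi>" and "g \<in> carrier G"
  shows "graph_automorphism V E (\<phi> g)"
  using assms group_action.bij_prop0[of G V \<phi> g]
  unfolding cube_action_def graph_automorphism_def Bij_def by blast

lemma graph_automorphism_inv_into:
  assumes "graph_automorphism V E f"
  shows "graph_automorphism V E (inv_into V f)"
proof -
  have f: "bij_betw f V V" and edges: "\<forall>x\<in>V. \<forall>y\<in>V. E (f x) (f y) \<longleftrightarrow> E x y"
    using assms unfolding graph_automorphism_def by blast+
  have "E (inv_into V f x) (inv_into V f y) \<longleftrightarrow> E x y" if "x \<in> V" "y \<in> V" for x y
  proof -
    have "inv_into V f x \<in> V" "inv_into V f y \<in> V"
      using bij_betw_apply[OF bij_betw_inv_into[OF f]] that by blast+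
    then show ?thesis
      using edges bij_betw_inv_into_right[OF f] that by metis
  qed
  then show ?thesis
    unfolding graph_automorphism_def using bij_betw_inv_into[OF f] by blast
qed

lemma gpath_image:
  assumes "graph_automorphism V E f" and "gpath V E x y n"
  shows "gpath V E (f x) (f y) n"
proof -
  obtain xs where xs: "length xs = Suc n" "hd xs = x" "last xs = y" "set xs \<subseteq> V"
    "\<forall>i<n. E (xs ! i) (xs ! Suc i)"
    using assms(2) unfolding gpath_def by blast
  have "xs \<noteq> []" using xs(1) by auto
  moreover have "E (f (xs ! i)) (f (xs ! Suc i))" if "i < n" for i
    using assms(1) xs that unfolding graph_automorphism_def by (simp add: subset_iff)
  moreover have "f ` V \<subseteq> V"
    using assms(1) unfolding graph_automorphism_def bij_betw_def by blast
  ultimately show ?thesis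
    unfolding gpath_def using xs
    by (intro exI[of _ "map f xs"]) (auto simp: hd_map last_map)
qed

lemma gpath_image_iff:
  assumes "graph_automorphism V E f" and "x \<in> V" and "y \<in> V"
  shows "gpath V E (f x) (f y) n \<longleftrightarrow> gpath V E x y n"
proof
  have f: "bij_betw f V V" using assms(1) unfolding graph_automorphism_def by blast
  assume "gpath V E (f x) (f y) n"
  from gpath_image[OF graph_automorphism_inv_into[OF assms(1)] this]
  show "gpath V E x y n" using bij_betw_inv_into_left[OF f] assms(2,3) by simp
qed (rule gpath_image[OF assms(1)])

lemma gdist_image:
  assumes "graph_automorphism V E f" and "x \<in> V" and "y \<in> V"
  shows "gdist V E (f x) (f y) = gdist V E x y"
proof -
  have "gpath V E (f x) (f y) = gpath V E x y"
    using gpath_image_iff[OF assms] by (rule ext)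
  then show ?thesis unfolding gdist_def by simp
qed

lemma ginterval_image:
  assumes "graph_automorphism V E f" and "x \<in> V" and "y \<in> V"
  shows "f ` ginterval V E x y = ginterval V E (f x) (f y)"
proof -
  have f: "bij_betw f V V" using assms(1) unfolding graph_automorphism_def by blast
  have "ginterval V E (f x) (f y) = {z \<in> f ` V. gdist V E (f x) z + gdist V E z (f y) = gdist V E (f x) (f y)}"
    unfolding ginterval_def using f by (simp add: bij_betw_imp_surj_on)
  also have "\<dots> = f ` ginterval V E x y"
    unfolding ginterval_def using gdist_image[OF assms(1)] assms(2,3) by auto
  finally show ?thesis by simp
qed

lemma gconvex_image:
  assumes "graph_automorphism V E f" and "gconvex V E C"
  shows "gconvex V E (f ` C)"
  unfolding gconvex_def
proof (intro conjI ballI)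
  have f: "bij_betw f V V" using assms(1) unfolding graph_automorphism_def by blast
  have C: "C \<subseteq> V" using assms(2) unfolding gconvex_def by blast
  show "f ` C \<subseteq> V" using C f by (auto simp: bij_betw_def)
  fix a b assume "a \<in> f ` C" "b \<in> f ` C"
  then obtain x y where xy: "x \<in> C" "y \<in> C" "a = f x" "b = f y" by blast
  then have "ginterval V E a b = f ` ginterval V E x y"
    using ginterval_image[OF assms(1)] C by blast
  also have "\<dots> \<subseteq> f ` C" using assms(2) xy unfolding gconvex_def by blast
  finally show "ginterval V E a b \<subseteq> f ` C" .
qed

lemma graph_automorphism_image_Diff:
  assumes "graph_automorphism V E f" and "C \<subseteq> V"
  shows "f ` (V - C) = V - f ` C"
proof -
  have inj: "inj_on f V" and surj: "f ` V = V"
    using assms(1) unfolding graph_automorphism_def bij_betw_def by blast+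
  show ?thesis using inj_on_image_set_diff[OF inj _ assms(2)] surj by simp
qed

lemma halfspaces_image:
  assumes "graph_automorphism V E f" and "h \<in> halfspaces V E"
  shows "f ` h \<in> halfspaces V E"
proof -
  have inj: "inj_on f V" and surj: "f ` V = V"
    using assms(1) unfolding graph_automorphism_def bij_betw_def by blast+
  have h: "h \<noteq> {}" "h \<subseteq> V" "h \<noteq> V" "gconvex V E h" "gconvex V E (V - h)"
    using assms(2) unfolding halfspaces_def by blast+
  have "gconvex V E (V - f ` h)"
    using gconvex_image[OF assms(1) h(5)] graph_automorphism_image_Diff[OF assms(1) h(2)] by simp
  moreover have "f ` h \<noteq> V"
    using inj_on_image_eq_iff[OF inj h(2), of V] surj h(3) by simp
  moreover have "f ` h \<subseteq> V" using h(2) surj by blast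
  ultimately show ?thesis
    unfolding halfspaces_def using h(1) gconvex_image[OF assms(1) h(4)] by blast
qed

section \<open>The Roller compactification via consistent orientations\<close>

lemma halfspaces_compl: "h \<in> halfspaces V E \<Longrightarrow> V - h \<in> halfspaces V E"
  unfolding halfspaces_def by (auto simp: Diff_Diff_Int Int_absorb1)

lemma gconvex_Int: "gconvex V E A \<Longrightarrow> gconvex V E B \<Longrightarrow> gconvex V E (A \<inter> B)"
  unfolding gconvex_def by blast

lemma median_graph_Helly3:
  assumes "median_graph V E" and "gconvex V E A" "gconvex V E B" "gconvex V E C"
    and "A \<inter> B \<noteq> {}" "B \<inter> C \<noteq> {}" "A \<inter> C \<noteq> {}"
  shows "A \<inter> B \<inter> C \<noteq> {}"
proof -
  obtain a b c where abc: "a \<in> B \<inter> C" "b \<in> A \<inter> C" "c \<in> A \<inter> B"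
    using assms(5-7) by blast
  then have "a \<in> V" "b \<in> V" "c \<in> V"
    using assms(2-4) unfolding gconvex_def by blast+
  then obtain m where m: "m \<in> ginterval V E a b \<inter> ginterval V E b c \<inter> ginterval V E a c"
    using assms(1) unfolding median_graph_def by blast
  have "m \<in> A" "m \<in> B" "m \<in> C"
    using m abc assms(2-4) unfolding gconvex_def by blast+
  then show ?thesis by blast
qed

lemma median_graph_Helly:
  assumes "median_graph V E" and "finite \<A>" and "\<A> \<noteq> {}" and "\<forall>A\<in>\<A>. gconvex V E A"
    and "\<forall>A\<in>\<A>. \<forall>B\<in>\<A>. A \<inter> B \<noteq> {}"
  shows "\<Inter>\<A> \<noteq> {}"
  using assms(2-5)
proof (induction "card \<A>" arbitrary: \<A> rule: less_induct)
  case less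
  obtain A where A: "A \<in> \<A>" using less.prems by blast
  show ?case
  proof (cases "\<A> = {A}")
    case True
    then show ?thesis using less.prems(4) by simp
  next
    case False
    define \<A>' where "\<A>' = (\<lambda>B. A \<inter> B) ` (\<A> - {A})"
    have "card \<A>' \<le> card (\<A> - {A})"
      unfolding \<A>'_def using less.prems(1) by (simp add: card_image_le)
    also have "\<dots> < card \<A>" using card_Diff1_less[OF less.prems(1) A] .
    finally have "\<Inter>\<A>' \<noteq> {}"
    proof (rule less.hyps)
      show "finite \<A>'" "\<A>' \<noteq> {}"
        unfolding \<A>'_def using less.prems(1) False A by auto
      show "\<forall>C\<in>\<A>'. gconvex V E C"
        unfolding \<A>'_def using less.prems(3) A gconvex_Int by blast
      have "(A \<inter> B) \<inter> (A \<inter> C) \<noteq> {}" if "B \<in> \<A>" "C \<in> \<A>" for B C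
        using median_graph_Helly3[OF assms(1), of A B C] less.prems(3,4) A that
        by (simp add: Int_assoc Int_left_commute)
      then show "\<forall>C\<in>\<A>'. \<forall>D\<in>\<A>'. C \<inter> D \<noteq> {}"
        unfolding \<A>'_def by blast
    qed
    moreover have "\<Inter>\<A>' \<subseteq> \<Inter>\<A>"
      unfolding \<A>'_def using False A by blast
    ultimately show ?thesis by blast
  qed
qed

lemma roller_subset_halfspaces: "\<xi> \<in> roller V E \<Longrightarrow> \<xi> \<subseteq> halfspaces V E"
  by (simp add: roller_def)

lemma roller_subset_Pow: "\<xi> \<in> roller V E \<Longrightarrow> \<xi> \<subseteq> Pow V"
  using roller_subset_halfspaces unfolding halfspaces_def by blast

lemma roller_agrees_with_vertex:
  assumes "\<xi> \<in> roller V E" and "finite F" and "F \<subseteq> halfspaces V E"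
  shows "\<exists>u\<in>V. \<forall>h\<in>F. h \<in> \<xi> \<longleftrightarrow> u \<in> h"
proof -
  obtain u where "u \<in> V" "\<xi> \<inter> F = U_vert V E u \<inter> F"
    using assms unfolding roller_def by blast
  then show ?thesis using assms(3) unfolding U_vert_def by blast
qed

lemma roller_nonempty_vertices: "\<xi> \<in> roller V E \<Longrightarrow> V \<noteq> {}"
  using roller_agrees_with_vertex[of \<xi> V E "{}"] by blast

lemma roller_total:
  assumes "\<xi> \<in> roller V E" and "h \<in> halfspaces V E"
  shows "h \<in> \<xi> \<or> V - h \<in> \<xi>"
proof -
  have F: "{h, V - h} \<subseteq> halfspaces V E" using assms(2) halfspaces_compl by blast
  have "\<exists>u\<in>V. \<forall>k\<in>{h, V - h}. k \<in> \<xi> \<longleftrightarrow> u \<in> k"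
    by (rule roller_agrees_with_vertex[OF assms(1) _ F]) simp
  then obtain u where "u \<in> V" "h \<in> \<xi> \<longleftrightarrow> u \<in> h" "V - h \<in> \<xi> \<longleftrightarrow> u \<in> V - h" by blast
  then show ?thesis by blast
qed

lemma roller_Int_nonempty:
  assumes "\<xi> \<in> roller V E" and "h \<in> \<xi>" and "k \<in> \<xi>"
  shows "h \<inter> k \<noteq> {}"
proof -
  have F: "{h, k} \<subseteq> halfspaces V E" using assms roller_subset_halfspaces by blast
  have "\<exists>u\<in>V. \<forall>l\<in>{h, k}. l \<in> \<xi> \<longleftrightarrow> u \<in> l"
    by (rule roller_agrees_with_vertex[OF assms(1) _ F]) simp
  then obtain u where "u \<in> h" "u \<in> k" using assms(2,3) by blast
  then show ?thesis by blast
qed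

lemma roller_compl_iff:
  assumes "\<xi> \<in> roller V E" and "h \<in> halfspaces V E"
  shows "V - h \<in> \<xi> \<longleftrightarrow> h \<notin> \<xi>"
  using roller_total[OF assms] roller_Int_nonempty[OF assms(1), of h "V - h"] by blast

lemma consistent_orientation_in_roller:
  assumes "median_graph V E" and "V \<noteq> {}" and "U \<subseteq> halfspaces V E"
    and total: "\<And>h. h \<in> halfspaces V E \<Longrightarrow> h \<in> U \<or> V - h \<in> U"
    and pairwise: "\<And>h k. h \<in> U \<Longrightarrow> k \<in> U \<Longrightarrow> h \<inter> k \<noteq> {}"
  shows "U \<in> roller V E"
proof -
  have "\<exists>u\<in>V. U \<inter> F = U_vert V E u \<inter> F" if F: "finite F" "F \<subseteq> halfspaces V E" for F
  proof -
    \<comment> \<open>V is included so that the family is nonempty even when U misses F.\<close>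
    define \<A> where "\<A> = insert V (U \<inter> (F \<union> (\<lambda>h. V - h) ` F))"
    have "\<Inter>\<A> \<noteq> {}"
    proof (rule median_graph_Helly[OF assms(1)])
      show "finite \<A>" "\<A> \<noteq> {}" unfolding \<A>_def using F by auto
      have "gconvex V E V" unfolding gconvex_def ginterval_def by blast
      then show "\<forall>A\<in>\<A>. gconvex V E A"
        unfolding \<A>_def using assms(3) unfolding halfspaces_def by blast
      have "V \<inter> h \<noteq> {}" if "h \<in> U" for h
        using that assms(3) unfolding halfspaces_def by blast
      then show "\<forall>A\<in>\<A>. \<forall>B\<in>\<A>. A \<inter> B \<noteq> {}"
        unfolding \<A>_def using assms(2) pairwise by blast
    qed
    then obtain u where u: "\<forall>A\<in>\<A>. u \<in> A" by blast
    have "h \<in> U \<longleftrightarrow> u \<in> h" if "h \<in> F" for h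
    proof
      show "h \<in> U \<Longrightarrow> u \<in> h" using u that unfolding \<A>_def by blast
      show "u \<in> h \<Longrightarrow> h \<in> U" using u that total F(2) unfolding \<A>_def by blast
    qed
    moreover have "u \<in> V" using u unfolding \<A>_def by blast
    ultimately show ?thesis
      unfolding U_vert_def using F(2) by blast
  qed
  then show "U \<in> roller V E" unfolding roller_def using assms(3) by blast
qed

lemma roller_image:
  assumes "median_graph V E" and "graph_automorphism V E f" and "\<xi> \<in> roller V E"
  shows "(\<lambda>h. f ` h) ` \<xi> \<in> roller V E"
proof (rule consistent_orientation_in_roller[OF assms(1) roller_nonempty_vertices[OF assms(3)]])
  show "(\<lambda>h. f ` h) ` \<xi> \<subseteq> halfspaces V E"
    using roller_subset_halfspaces[OF assms(3)] halfspaces_image[OF assms(2)] by blast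
next
  fix h assume h: "h \<in> halfspaces V E"
  have surj: "f ` V = V"
    using assms(2) unfolding graph_automorphism_def bij_betw_def by blast
  define h' where "h' = inv_into V f ` h"
  have h'H: "h' \<in> halfspaces V E"
    unfolding h'_def using halfspaces_image[OF graph_automorphism_inv_into[OF assms(2)] h] .
  have "h \<subseteq> V" using h unfolding halfspaces_def by blast
  then have img: "f ` h' = h" unfolding h'_def using image_inv_into_cancel[OF surj] by blast
  have img_compl: "f ` (V - h') = V - h"
    using graph_automorphism_image_Diff[OF assms(2)] h'H img unfolding halfspaces_def by blast
  have "h' \<in> \<xi> \<or> V - h' \<in> \<xi>" using roller_total[OF assms(3) h'H] .
  then show "h \<in> (\<lambda>h. f ` h) ` \<xi> \<or> V - h \<in> (\<lambda>h. f ` h) ` \<xi>"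
    using img img_compl by blast
next
  fix h k assume "h \<in> (\<lambda>h. f ` h) ` \<xi>" "k \<in> (\<lambda>h. f ` h) ` \<xi>"
  then show "h \<inter> k \<noteq> {}" using roller_Int_nonempty[OF assms(3)] by blast
qed

section \<open>Majority vote over a finite family\<close>

definition votes :: "'x set set \<Rightarrow> 'x \<Rightarrow> nat" where
  "votes \<O> h = card {\<zeta> \<in> \<O>. h \<in> \<zeta>}"

definition majority :: "'x set set \<Rightarrow> 'x set" where
  "majority \<O> = {h. card \<O> < 2 * votes \<O> h}"

definition ties :: "'x set set \<Rightarrow> 'x set" where
  "ties \<O> = {h. 2 * votes \<O> h = card \<O>}"

lemma votes_le_card: "finite \<O> \<Longrightarrow> votes \<O> h \<le> card \<O>"
  unfolding votes_def by (rule card_mono) auto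

lemma votes_pos_imp_mem: "0 < votes \<O> h \<Longrightarrow> \<exists>\<zeta>\<in>\<O>. h \<in> \<zeta>"
  unfolding votes_def by (metis (mono_tags, lifting) card_gt_0_iff empty_Collect_eq)

lemma votes_complementary:
  assumes "finite \<O>" and "\<forall>\<zeta>\<in>\<O>. h' \<in> \<zeta> \<longleftrightarrow> h \<notin> \<zeta>"
  shows "votes \<O> h' = card \<O> - votes \<O> h"
proof -
  have "{\<zeta> \<in> \<O>. h' \<in> \<zeta>} = \<O> - {\<zeta> \<in> \<O>. h \<in> \<zeta>}" using assms(2) by blast
  then show ?thesis unfolding votes_def using assms(1) by (simp add: card_Diff_subset)
qed

lemma votes_common_member:
  assumes "finite \<O>" and "card \<O> < votes \<O> h + votes \<O> k"
  shows "\<exists>\<zeta>\<in>\<O>. h \<in> \<zeta> \<and> k \<in> \<zeta>"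
proof (rule ccontr)
  assume "\<not> ?thesis"
  then have "{\<zeta> \<in> \<O>. h \<in> \<zeta>} \<inter> {\<zeta> \<in> \<O>. k \<in> \<zeta>} = {}" by blast
  then have "votes \<O> h + votes \<O> k = card ({\<zeta> \<in> \<O>. h \<in> \<zeta>} \<union> {\<zeta> \<in> \<O>. k \<in> \<zeta>})"
    unfolding votes_def using assms(1) by (simp add: card_Un_disjoint)
  also have "\<dots> \<le> card \<O>" using assms(1) by (rule card_mono) blast
  finally show False using assms(2) by simp
qed

lemma votes_common_member_if_absent:
  assumes "finite \<O>" and "\<zeta> \<in> \<O>" "h \<notin> \<zeta>" "k \<notin> \<zeta>" and "card \<O> \<le> votes \<O> h + votes \<O> k"
  shows "\<exists>\<zeta>'\<in>\<O>. h \<in> \<zeta>' \<and> k \<in> \<zeta>'"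
proof -
  have "votes (\<O> - {\<zeta>}) x = votes \<O> x" if "x \<notin> \<zeta>" for x
    unfolding votes_def using that by (metis (lifting) Diff_iff singletonD singletonI)
  moreover have "card (\<O> - {\<zeta>}) < card \<O>" using assms(1,2) by (rule card_Diff1_less)
  ultimately have "\<exists>\<zeta>'\<in>\<O> - {\<zeta>}. h \<in> \<zeta>' \<and> k \<in> \<zeta>'"
    using votes_common_member[of "\<O> - {\<zeta>}" h k] assms by simp
  then show ?thesis by blast
qed

lemma ties_empty_if_odd: "odd (card \<O>) \<Longrightarrow> ties \<O> = {}"
  unfolding ties_def by (auto dest: sym)

lemma majority_subset_Union: "majority \<O> \<subseteq> \<Union>\<O>"
proof
  fix h assume "h \<in> majority \<O>"
  then have "0 < votes \<O> h" unfolding majority_def by simp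
  then show "h \<in> \<Union>\<O>" using votes_pos_imp_mem[of \<O> h] by blast
qed

lemma ties_subset_Union:
  assumes "finite \<O>" and "\<O> \<noteq> {}"
  shows "ties \<O> \<subseteq> \<Union>\<O>"
proof
  fix h assume "h \<in> ties \<O>"
  moreover have "0 < card \<O>" using assms by (simp add: card_gt_0_iff)
  ultimately have "0 < votes \<O> h" unfolding ties_def by simp
  then show "h \<in> \<Union>\<O>" using votes_pos_imp_mem[of \<O> h] by blast
qed

lemma votes_image:
  assumes "inj_on f V" and "finite \<O>" and "\<O> \<subseteq> Pow (Pow V)"
    and "(\<lambda>\<zeta>. (\<lambda>h. f ` h) ` \<zeta>) ` \<O> \<subseteq> \<O>" and "h \<subseteq> V"
  shows "votes \<O> (f ` h) = votes \<O> h"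
proof -
  let ?F = "\<lambda>\<zeta>. (\<lambda>h. f ` h) ` \<zeta>"
  have inj_img: "inj_on (\<lambda>h. f ` h) (Pow V)" using inj_on_image_Pow[OF assms(1)] .
  have inj_F: "inj_on ?F \<O>"
    using inj_on_subset[OF inj_on_image_Pow[OF inj_img] assms(3)] .
  then have F_perm: "?F ` \<O> = \<O>"
    using card_subset_eq[OF assms(2,4)] by (simp add: card_image)
  have mem: "f ` h \<in> ?F \<zeta> \<longleftrightarrow> h \<in> \<zeta>" if "\<zeta> \<in> \<O>" for \<zeta>
  proof -
    have "\<zeta> \<subseteq> Pow V" using assms(3) that by blast
    with assms(5) show ?thesis by (simp add: inj_on_image_mem_iff[OF inj_img])
  qed
  have "{\<zeta> \<in> \<O>. f ` h \<in> \<zeta>} = ?F ` {\<zeta> \<in> \<O>. h \<in> \<zeta>}"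
  proof
    show "{\<zeta> \<in> \<O>. f ` h \<in> \<zeta>} \<subseteq> ?F ` {\<zeta> \<in> \<O>. h \<in> \<zeta>}"
    proof
      fix \<zeta> assume \<zeta>: "\<zeta> \<in> {\<zeta> \<in> \<O>. f ` h \<in> \<zeta>}"
      then have "\<zeta> \<in> ?F ` \<O>" using F_perm by simp
      then obtain \<zeta>0 where \<zeta>0: "\<zeta>0 \<in> \<O>" "\<zeta> = ?F \<zeta>0" by blast
      then have "h \<in> \<zeta>0" using \<zeta> mem by simp
      then show "\<zeta> \<in> ?F ` {\<zeta> \<in> \<O>. h \<in> \<zeta>}" using \<zeta>0 by blast
    qed
    show "?F ` {\<zeta> \<in> \<O>. h \<in> \<zeta>} \<subseteq> {\<zeta> \<in> \<O>. f ` h \<in> \<zeta>}"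
      using assms(4) mem by auto
  qed
  moreover have "inj_on ?F {\<zeta> \<in> \<O>. h \<in> \<zeta>}" using inj_F by (rule inj_on_subset) blast
  ultimately show ?thesis unfolding votes_def by (simp add: card_image)
qed

lemma majority_image:
  assumes "bij_betw f V V" and "finite \<O>" and "\<O> \<subseteq> Pow (Pow V)"
    and "(\<lambda>\<zeta>. (\<lambda>h. f ` h) ` \<zeta>) ` \<O> \<subseteq> \<O>"
  shows "(\<lambda>h. f ` h) ` majority \<O> = majority \<O>"
proof -
  have inj: "inj_on f V" and surj: "f ` V = V" using assms(1) unfolding bij_betw_def by blast+
  have votes_eq: "votes \<O> (f ` h) = votes \<O> h" if "h \<subseteq> V" for h
    using votes_image[OF inj assms(2-4) that] .
  have sub: "h \<subseteq> V" if h: "h \<in> majority \<O>" for h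
  proof -
    obtain \<zeta> where "\<zeta> \<in> \<O>" "h \<in> \<zeta>" using majority_subset_Union[of \<O>] h by blast
    then show ?thesis using assms(3) by auto
  qed
  show ?thesis
  proof
    show "(\<lambda>h. f ` h) ` majority \<O> \<subseteq> majority \<O>"
      using votes_eq sub unfolding majority_def by auto
    show "majority \<O> \<subseteq> (\<lambda>h. f ` h) ` majority \<O>"
    proof
      fix h' assume h': "h' \<in> majority \<O>"
      define h where "h = inv_into V f ` h'"
      have "f ` h = h'" unfolding h_def using image_inv_into_cancel[OF surj sub[OF h']] .
      moreover have "h \<subseteq> V"
        unfolding h_def using bij_betw_imp_surj_on[OF bij_betw_inv_into[OF assms(1)]] sub[OF h'] by blast
      ultimately have "h \<in> majority \<O>" using h' votes_eq unfolding majority_def by auto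
      then show "h' \<in> (\<lambda>h. f ` h) ` majority \<O>" using \<open>f ` h = h'\<close> by blast
    qed
  qed
qed

context
  fixes V :: "'a set" and E :: "'a \<Rightarrow> 'a \<Rightarrow> bool" and \<O> :: "'a set set set"
  assumes median: "median_graph V E"
    and fin: "finite \<O>" and nonempty: "\<O> \<noteq> {}" and in_roller: "\<O> \<subseteq> roller V E"
begin

lemma majority_Un_ties_subset_halfspaces: "majority \<O> \<union> ties \<O> \<subseteq> halfspaces V E"
proof -
  have "\<Union>\<O> \<subseteq> halfspaces V E"
    using in_roller by (meson Union_least roller_subset_halfspaces subsetD)
  then show ?thesis using majority_subset_Union[of \<O>] ties_subset_Union[OF fin nonempty] by blast
qed

lemma votes_compl_halfspace:
  assumes "h \<in> halfspaces V E"
  shows "votes \<O> (V - h) = card \<O> - votes \<O> h"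
proof (rule votes_complementary[OF fin])
  show "\<forall>\<zeta>\<in>\<O>. V - h \<in> \<zeta> \<longleftrightarrow> h \<notin> \<zeta>"
    using roller_compl_iff[OF _ assms] in_roller by blast
qed

lemma ties_compl:
  assumes "h \<in> ties \<O>"
  shows "V - h \<in> ties \<O>"
proof -
  have "h \<in> halfspaces V E" using assms majority_Un_ties_subset_halfspaces by blast
  then have "votes \<O> (V - h) = card \<O> - votes \<O> h" by (rule votes_compl_halfspace)
  then show ?thesis using assms unfolding ties_def by simp
qed

lemma majority_Un_tiebreak_roller:
  assumes tiebreak: "T \<subseteq> ties \<O>" "\<forall>h\<in>ties \<O>. h \<in> T \<or> V - h \<in> T"
    and pairwise: "\<forall>h\<in>T. \<forall>k\<in>T. h \<inter> k \<noteq> {}"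
  shows "majority \<O> \<union> T \<in> roller V E"
proof (rule consistent_orientation_in_roller[OF median])
  show "V \<noteq> {}" using nonempty in_roller roller_nonempty_vertices by blast
  show "majority \<O> \<union> T \<subseteq> halfspaces V E"
    using majority_Un_ties_subset_halfspaces tiebreak(1) by blast
next
  fix h assume h: "h \<in> halfspaces V E"
  have compl: "votes \<O> (V - h) = card \<O> - votes \<O> h" "votes \<O> h \<le> card \<O>"
    using votes_compl_halfspace[OF h] votes_le_card[OF fin] by auto
  consider "card \<O> < 2 * votes \<O> h" | "2 * votes \<O> h < card \<O>" | "2 * votes \<O> h = card \<O>"
    by linarith
  then show "h \<in> majority \<O> \<union> T \<or> V - h \<in> majority \<O> \<union> T"
  proof cases
    case 2
    then have "card \<O> < 2 * votes \<O> (V - h)" using compl by simp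
    then show ?thesis unfolding majority_def by simp
  next
    case 3
    then show ?thesis using tiebreak(2) unfolding ties_def by blast
  qed (simp add: majority_def)
next
  fix h k assume hk: "h \<in> majority \<O> \<union> T" "k \<in> majority \<O> \<union> T"
  show "h \<inter> k \<noteq> {}"
  proof (cases "h \<in> majority \<O> \<or> k \<in> majority \<O>")
    case True
    have "card \<O> \<le> 2 * votes \<O> h" "card \<O> \<le> 2 * votes \<O> k"
      using hk tiebreak(1) unfolding majority_def ties_def by auto
    then have "card \<O> < votes \<O> h + votes \<O> k" using True unfolding majority_def by auto
    then obtain \<zeta> where "\<zeta> \<in> \<O>" "h \<in> \<zeta>" "k \<in> \<zeta>"
      using votes_common_member[OF fin] by blast
    then show ?thesis using in_roller roller_Int_nonempty by blast
  next
    case False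
    then show ?thesis using hk pairwise by blast
  qed
qed

lemma majority_Un_ties_Int_roller:
  assumes "\<zeta> \<in> \<O>"
  shows "majority \<O> \<union> (ties \<O> \<inter> \<zeta>) \<in> roller V E"
proof (rule majority_Un_tiebreak_roller)
  have \<zeta>: "\<zeta> \<in> roller V E" using assms in_roller by blast
  show "\<forall>h\<in>ties \<O>. h \<in> ties \<O> \<inter> \<zeta> \<or> V - h \<in> ties \<O> \<inter> \<zeta>"
    using roller_compl_iff[OF \<zeta>] majority_Un_ties_subset_halfspaces ties_compl by blast
  show "\<forall>h\<in>ties \<O> \<inter> \<zeta>. \<forall>k\<in>ties \<O> \<inter> \<zeta>. h \<inter> k \<noteq> {}"
    using roller_Int_nonempty[OF \<zeta>] by blast
qed blast

lemma majority_Un_ties_Diff_roller: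
  assumes "\<zeta> \<in> \<O>"
  shows "majority \<O> \<union> (ties \<O> - \<zeta>) \<in> roller V E"
proof (rule majority_Un_tiebreak_roller)
  have \<zeta>: "\<zeta> \<in> roller V E" using assms in_roller by blast
  show "\<forall>h\<in>ties \<O>. h \<in> ties \<O> - \<zeta> \<or> V - h \<in> ties \<O> - \<zeta>"
    using roller_compl_iff[OF \<zeta>] majority_Un_ties_subset_halfspaces ties_compl by blast
  show "\<forall>h\<in>ties \<O> - \<zeta>. \<forall>k\<in>ties \<O> - \<zeta>. h \<inter> k \<noteq> {}"
  proof (intro ballI)
    fix h k assume h: "h \<in> ties \<O> - \<zeta>" and k: "k \<in> ties \<O> - \<zeta>"
    then have "card \<O> \<le> votes \<O> h + votes \<O> k" unfolding ties_def by simp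
    then obtain \<zeta>' where "\<zeta>' \<in> \<O>" "h \<in> \<zeta>'" "k \<in> \<zeta>'"
      using votes_common_member_if_absent[OF fin assms] h k by blast
    then show "h \<inter> k \<noteq> {}" using in_roller roller_Int_nonempty by blast
  qed
qed blast

end

section \<open>The induced action on the Roller compactification\<close>

lemma group_action_group: "group_action G V \<phi> \<Longrightarrow> group G"
  using group_hom.axioms(1)[OF group_action.group_hom] .

lemma cube_action_group_action: "cube_action G V E \<phi> \<Longrightarrow> group_action G V \<phi>"
  unfolding cube_action_def by blast

lemma roller_act_mult:
  assumes "group_action G V \<phi>" and "g \<in> carrier G" "k \<in> carrier G" and "U \<subseteq> Pow V"
  shows "roller_act \<phi> g (roller_act \<phi> k U) = roller_act \<phi> (g \<otimes>\<^bsub>G\<^esub> k) U"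
proof -
  have "\<phi> g ` \<phi> k ` h = \<phi> (g \<otimes>\<^bsub>G\<^esub> k) ` h" if "h \<in> U" for h
    using group_action.composition_rule[OF assms(1) _ assms(2,3)] that assms(4)
    by (force simp: image_image)
  then show ?thesis unfolding roller_act_def image_image by (rule image_cong[OF refl])
qed

lemma roller_act_one:
  assumes "group_action G V \<phi>" and "U \<subseteq> Pow V"
  shows "roller_act \<phi> \<one>\<^bsub>G\<^esub> U = U"
proof -
  have "\<phi> \<one>\<^bsub>G\<^esub> x = x" if "x \<in> V" for x
    using fun_cong[OF group_action.id_eq_one[OF assms(1)], of x] that by simp
  then have "\<phi> \<one>\<^bsub>G\<^esub> ` h = h" if "h \<in> U" for h
    using that assms(2) by force
  then show ?thesis unfolding roller_act_def by simp
qed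

lemma roller_orbit_self:
  assumes "group_action G V \<phi>" and "U \<subseteq> Pow V"
  shows "U \<in> roller_orbit G \<phi> U"
proof -
  have "\<one>\<^bsub>G\<^esub> \<in> carrier G"
    by (rule monoid.one_closed[OF group.is_monoid[OF group_action_group[OF assms(1)]]])
  then show ?thesis unfolding roller_orbit_def using roller_act_one[OF assms] by force
qed

lemma roller_act_roller_orbit:
  assumes "group_action G V \<phi>" and "U \<subseteq> Pow V" and "g \<in> carrier G"
  shows "roller_act \<phi> g ` roller_orbit G \<phi> U \<subseteq> roller_orbit G \<phi> U"
proof
  fix \<zeta> assume "\<zeta> \<in> roller_act \<phi> g ` roller_orbit G \<phi> U"
  then obtain k where k: "k \<in> carrier G" "\<zeta> = roller_act \<phi> g (roller_act \<phi> k U)"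
    unfolding roller_orbit_def by blast
  have "g \<otimes>\<^bsub>G\<^esub> k \<in> carrier G"
    using monoid.m_closed[OF group.is_monoid[OF group_action_group[OF assms(1)]] assms(3) k(1)] .
  then show "\<zeta> \<in> roller_orbit G \<phi> U"
    unfolding roller_orbit_def k(2) roller_act_mult[OF assms(1,3) k(1) assms(2)] by blast
qed

lemma roller_act_roller:
  assumes "median_graph V E" and "cube_action G V E \<phi>" and "g \<in> carrier G"
    and "\<xi> \<in> roller V E"
  shows "roller_act \<phi> g \<xi> \<in> roller V E"
  unfolding roller_act_def
  using roller_image[OF assms(1) cube_action_graph_automorphism[OF assms(2,3)] assms(4)] .

lemma roller_orbit_subset_roller:
  assumes "median_graph V E" and "cube_action G V E \<phi>" and "\<xi> \<in> roller V E"
  shows "roller_orbit G \<phi> \<xi> \<subseteq> roller V E"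
  unfolding roller_orbit_def using roller_act_roller[OF assms(1,2) _ assms(3)] by blast

lemma majority_roller_orbit_invariant:
  assumes "median_graph V E" and "cube_action G V E \<phi>" and "\<xi> \<in> roller V E"
    and "finite (roller_orbit G \<phi> \<xi>)" and "g \<in> carrier G"
  shows "roller_act \<phi> g (majority (roller_orbit G \<phi> \<xi>)) = majority (roller_orbit G \<phi> \<xi>)"
proof -
  have act: "roller_act \<phi> g = (\<lambda>U. (\<lambda>h. \<phi> g ` h) ` U)"
    by (rule ext) (simp add: roller_act_def)
  have "bij_betw (\<phi> g) V V"
    using cube_action_graph_automorphism[OF assms(2,5)] unfolding graph_automorphism_def by blast
  moreover have "roller_orbit G \<phi> \<xi> \<subseteq> Pow (Pow V)"
    using roller_orbit_subset_roller[OF assms(1-3)] roller_subset_Pow by blast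
  moreover have "(\<lambda>U. (\<lambda>h. \<phi> g ` h) ` U) ` roller_orbit G \<phi> \<xi> \<subseteq> roller_orbit G \<phi> \<xi>"
    using roller_act_roller_orbit[OF cube_action_group_action[OF assms(2)]
        roller_subset_Pow[OF assms(3)] assms(5)]
    unfolding act .
  ultimately show ?thesis unfolding act by (rule majority_image[OF _ assms(4)])
qed

lemma majority_Un_ties_roller_orbit:
  assumes "median_graph V E" and "cube_action G V E \<phi>" and "\<xi> \<in> roller V E"
    and "finite (roller_orbit G \<phi> \<xi>)"
  shows "majority (roller_orbit G \<phi> \<xi>) \<union> (ties (roller_orbit G \<phi> \<xi>) \<inter> \<xi>) \<in> roller V E"
    and "majority (roller_orbit G \<phi> \<xi>) \<union> (ties (roller_orbit G \<phi> \<xi>) - \<xi>) \<in> roller V E"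
proof -
  have self: "\<xi> \<in> roller_orbit G \<phi> \<xi>"
    using roller_orbit_self[OF cube_action_group_action[OF assms(2)] roller_subset_Pow[OF assms(3)]] .
  then have "roller_orbit G \<phi> \<xi> \<noteq> {}" by blast
  note orbit = assms(1,4) this roller_orbit_subset_roller[OF assms(1-3)] self
  show "majority (roller_orbit G \<phi> \<xi>) \<union> (ties (roller_orbit G \<phi> \<xi>) \<inter> \<xi>) \<in> roller V E"
    by (rule majority_Un_ties_Int_roller[OF orbit])
  show "majority (roller_orbit G \<phi> \<xi>) \<union> (ties (roller_orbit G \<phi> \<xi>) - \<xi>) \<in> roller V E"
    by (rule majority_Un_ties_Diff_roller[OF orbit])
qed

lemma roller_interval_invariant:
  assumes "median_graph V E" and "cube_action G V E \<phi>"
    and "\<forall>g\<in>carrier G. roller_act \<phi> g (v \<inter> w) = v \<inter> w"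
  shows "{roller_act \<phi> g m | g m. g \<in> carrier G \<and> m \<in> roller_interval V E v w}
    = roller_interval V E v w"
proof
  show "{roller_act \<phi> g m | g m. g \<in> carrier G \<and> m \<in> roller_interval V E v w}
    \<subseteq> roller_interval V E v w"
  proof
    fix y assume "y \<in> {roller_act \<phi> g m | g m. g \<in> carrier G \<and> m \<in> roller_interval V E v w}"
    then obtain g m where gm: "g \<in> carrier G" "m \<in> roller V E" "v \<inter> w \<subseteq> m"
      "y = roller_act \<phi> g m"
      unfolding roller_interval_def by blast
    have "v \<inter> w = roller_act \<phi> g (v \<inter> w)" using assms(3) gm(1) by simp
    also have "\<dots> \<subseteq> y" unfolding gm(4) roller_act_def using gm(3) by blast
    finally show "y \<in> roller_interval V E v w"
      unfolding roller_interval_def gm(4) using roller_act_roller[OF assms(1,2) gm(1,2)] by blast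
  qed
  show "roller_interval V E v w
    \<subseteq> {roller_act \<phi> g m | g m. g \<in> carrier G \<and> m \<in> roller_interval V E v w}"
  proof
    fix m assume m: "m \<in> roller_interval V E v w"
    have "m \<subseteq> Pow V" using m roller_subset_Pow unfolding roller_interval_def by blast
    then have "m \<in> roller_orbit G \<phi> m"
      by (rule roller_orbit_self[OF cube_action_group_action[OF assms(2)]])
    then show "m \<in> {roller_act \<phi> g m | g m. g \<in> carrier G \<and> m \<in> roller_interval V E v w}"
      using m unfolding roller_orbit_def by blast
  qed
qed

theorem proposition9p1:
  fixes G :: "('g, 'b) monoid_scheme" and V :: "'a set" and E :: "'a \<Rightarrow> 'a \<Rightarrow> bool"
    and \<phi> :: "'g \<Rightarrow> 'a \<Rightarrow> 'a"
  assumes "group G"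
    and "median_graph V E" and "finite_dim V E" and "countable V"
    and "cube_action G V E \<phi>"
  shows "((\<exists>\<xi>\<in>roller V E. finite (roller_orbit G \<phi> \<xi>)) \<longrightarrow>
           (\<exists>v\<in>roller V E. \<exists>w\<in>roller V E.
              {roller_act \<phi> g m | g m. g \<in> carrier G \<and> m \<in> roller_interval V E v w}
                = roller_interval V E v w))
       \<and> ((\<exists>\<xi>\<in>roller V E. finite (roller_orbit G \<phi> \<xi>) \<and> odd (card (roller_orbit G \<phi> \<xi>))) \<longrightarrow>
           (\<exists>\<xi>\<in>roller V E. \<forall>g\<in>carrier G. roller_act \<phi> g \<xi> = \<xi>))"
proof (intro conjI impI)
  assume "\<exists>\<xi>\<in>roller V E. finite (roller_orbit G \<phi> \<xi>)"
  then obtain \<xi> where \<xi>: "\<xi> \<in> roller V E" "finite (roller_orbit G \<phi> \<xi>)" by blast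
  let ?\<O> = "roller_orbit G \<phi> \<xi>"
  let ?v = "majority ?\<O> \<union> (ties ?\<O> \<inter> \<xi>)" and ?w = "majority ?\<O> \<union> (ties ?\<O> - \<xi>)"
  have "?v \<inter> ?w = majority ?\<O>" unfolding majority_def ties_def by auto
  then have "\<forall>g\<in>carrier G. roller_act \<phi> g (?v \<inter> ?w) = ?v \<inter> ?w"
    using majority_roller_orbit_invariant[OF assms(2,5) \<xi>] by simp
  then show "\<exists>v\<in>roller V E. \<exists>w\<in>roller V E.
      {roller_act \<phi> g m | g m. g \<in> carrier G \<and> m \<in> roller_interval V E v w}
        = roller_interval V E v w"
    using roller_interval_invariant[OF assms(2,5)] majority_Un_ties_roller_orbit[OF assms(2,5) \<xi>]
    by blast
next
  assume "\<exists>\<xi>\<in>roller V E. finite (roller_orbit G \<phi> \<xi>) \<and> odd (card (roller_orbit G \<phi> \<xi>))"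
  then obtain \<xi> where \<xi>: "\<xi> \<in> roller V E" "finite (roller_orbit G \<phi> \<xi>)"
    and odd: "odd (card (roller_orbit G \<phi> \<xi>))" by blast
  have "majority (roller_orbit G \<phi> \<xi>) \<in> roller V E"
    using majority_Un_ties_roller_orbit(1)[OF assms(2,5) \<xi>] ties_empty_if_odd[OF odd] by simp
  then show "\<exists>\<xi>\<in>roller V E. \<forall>g\<in>carrier G. roller_act \<phi> g \<xi> = \<xi>"
    using majority_roller_orbit_invariant[OF assms(2,5) \<xi>] by blast
qed

end
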